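(* Let $0<\alpha_i\le\beta_i$ for $i=1,\ldots,n$, $\alpha:=\sum_{i=1}^n\alpha_i$ and $\beta:=\sum_{i=1}^n\beta_i$. (i) If $\psi\in\Psi_n$, then $\alpha\,\psi\left(\frac{\alpha_1}{\alpha},\ldots,\frac{\alpha_n}{\alpha}\right)\le\beta\,\psi\left(\frac{\beta_1}{\beta},\ldots,\frac{\beta_n}{\beta}\right)$. (ii) If $\psi\in\Psi_n^{\rm sc}$ and $\alpha_i<\beta_i$ for some $i\in\{1,\ldots,n\}$, then this inequality is strict.
   Context: $n\ge2$ is an integer. $\Omega_n:=\{(t_1,\ldots,t_n)\in\mathbb{R}^n: t_1,\ldots,t_n\ge0,\ t_1+\cdots+t_n=1\}$ and $\Omega_n^\circ:=\{t\in\Omega_n: t_1,\ldots,t_n<1\}$; $\mathbf{e}_i$ denotes the $i$th standard unit vector of $\mathbb{R}^n$. $\Psi_n$ is the class of all convex continuous functions $\psi:\Omega_n\to\mathbb{R}$ such that (B1) $\psi(\mathbf{e}_1)=\cdots=\psi(\mathbf{e}_n)=1$, and (B2) for every $t\in\Omega_n^\circ$ and every $i$: $\psi(t)\ge(1-t_i)\,\psi\left(\frac{t_1}{1-t_i},\ldots,\frac{t_{i-1}}{1-t_i},0,\frac{t_{i+1}}{1-t_i},\ldots,\frac{t_n}{1-t_i}\right)$. $\Psi_n^{\rm sc}$ is the subclass of strictly convex members of $\Psi_n$. *)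

theory Defs
  imports "HOL-Analysis.Analysis"
begin

text \<open>The simplex Omega_n, with coordinates indexed by a finite type 'n (n = CARD('n)).\<close>
definition Omega :: "(real ^ 'n::finite) set" where
  "Omega = {t. (\<forall>i. t $ i \<ge> 0) \<and> (\<Sum>i\<in>UNIV. t $ i) = 1}"

definition Omega_circ :: "(real ^ 'n::finite) set" where
  "Omega_circ = {t \<in> Omega. \<forall>i. t $ i < 1}"

definition unitv :: "'n::finite \<Rightarrow> real ^ 'n" where
  "unitv i = (\<chi> j. if j = i then 1 else 0)"

definition strictly_convex_on :: "'a::real_vector set \<Rightarrow> ('a \<Rightarrow> real) \<Rightarrow> bool" where
  "strictly_convex_on S f \<longleftrightarrow> convex S \<and>
    (\<forall>x\<in>S. \<forall>y\<in>S. x \<noteq> y \<longrightarrow> (\<forall>u. 0 < u \<and> u < 1 \<longrightarrow>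
       f ((1 - u) *\<^sub>R x + u *\<^sub>R y) < (1 - u) * f x + u * f y))"

definition Psi :: "((real ^ 'n::finite) \<Rightarrow> real) set" where
  "Psi = {\<psi>. convex_on Omega \<psi> \<and> continuous_on Omega \<psi> \<and>
     (\<forall>i. \<psi> (unitv i) = 1) \<and>
     (\<forall>t\<in>Omega_circ. \<forall>i. \<psi> t \<ge> (1 - t $ i) *
        \<psi> (\<chi> j. if j = i then 0 else t $ j / (1 - t $ i)))}"

definition Psi_sc :: "((real ^ 'n::finite) \<Rightarrow> real) set" where
  "Psi_sc = {\<psi> \<in> Psi. strictly_convex_on Omega \<psi>}"

end

theory Submission
  imports Defs
begin

text \<open>Extend \<open>\<psi>\<close> to the nonnegative orthant by its perspective
  \<open>\<phi>(x) = |x| \<psi>(x / |x|)\<close>, where \<open>|x|\<close> is the coordinate sum; the claim is that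
  \<open>\<phi>\<close> is monotone on vectors with positive entries. Since \<open>\<phi>\<close> is positively homogeneous,
  convexity of \<open>\<psi>\<close> makes it subadditive (strictly so, for strictly convex \<open>\<psi>\<close>, on
  non-proportional vectors), and (B2) says exactly that setting one coordinate to zero does
  not increase \<open>\<phi>\<close>. To raise a single coordinate from \<open>x\<^sub>i\<close> to \<open>y\<^sub>i\<close>,
  write \<open>x = (1 - l) z + l y\<close> with \<open>l = x\<^sub>i / y\<^sub>i\<close> and \<open>z\<close> the vector \<open>y\<close> with
  \<open>i\<close>-th coordinate zero; then \<open>\<phi>(x) \<le> (1 - l) \<phi>(z) + l \<phi>(y) \<le> \<phi>(y)\<close>.
  Raising the coordinates one at a time proves the theorem.\<close>

abbreviation coord_sum :: "real ^ 'n::finite \<Rightarrow> real" where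
  "coord_sum x \<equiv> \<Sum>i\<in>UNIV. x $ i"

definition perspective :: "(real ^ 'n::finite \<Rightarrow> real) \<Rightarrow> real ^ 'n \<Rightarrow> real" where
  "perspective \<psi> x = coord_sum x * \<psi> ((1 / coord_sum x) *\<^sub>R x)"

lemma coord_sum_drop_coordinate:
  "coord_sum x = coord_sum (\<chi> j. if j = i then 0 else x $ j) + x $ i"
  by (simp add: sum.If_cases Diff_eq[symmetric] sum_diff1)

lemma exists_other_index:
  fixes i :: "'n::finite"
  assumes "CARD('n) \<ge> 2"
  obtains j where "j \<noteq> i"
proof -
  have "\<not> CARD('n) \<le> Suc 0" using assms by simp
  then obtain a b :: 'n where "a \<noteq> b" using card_le_Suc0_iff_eq[of "UNIV :: 'n set"] by auto
  then show thesis using that by metis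
qed

lemma coord_sum_drop_coordinate_pos:
  fixes x :: "real ^ 'n::finite"
  assumes "CARD('n) \<ge> 2" and "\<And>j. 0 < x $ j"
  shows "0 < coord_sum (\<chi> j. if j = i then 0 else x $ j)"
proof -
  obtain k where "k \<noteq> i" using exists_other_index[OF assms(1)] .
  then have "0 < (\<chi> j. if j = i then 0 else x $ j) $ k" using assms(2) by simp
  also have "\<dots> \<le> coord_sum (\<chi> j. if j = i then 0 else x $ j)"
    by (rule member_le_sum) (auto simp: assms(2) less_imp_le)
  finally show ?thesis .
qed

lemma scaled_in_Omega:
  assumes "\<And>i. 0 \<le> x $ i" and "0 < coord_sum x"
  shows "(1 / coord_sum x) *\<^sub>R x \<in> Omega"
  using assms by (simp add: Omega_def sum_divide_distrib[symmetric])

lemma perspective_scaleR: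
  assumes "0 \<le> c"
  shows "perspective \<psi> (c *\<^sub>R x) = c * perspective \<psi> x"
  using assms by (cases "c = 0") (simp_all add: perspective_def sum_distrib_left[symmetric])

lemma perspective_zero [simp]: "perspective \<psi> 0 = 0"
  by (simp add: perspective_def)

lemma nonneg_coord_sum_pos:
  assumes "\<And>i. 0 \<le> x $ i" and "x \<noteq> 0"
  shows "0 < coord_sum x"
  using assms by (simp add: less_le sum_nonneg sum_nonneg_eq_0_iff vec_eq_iff)

lemma perspective_add_eq:
  fixes x y :: "real ^ 'n::finite" and \<psi> :: "real ^ 'n \<Rightarrow> real"
  assumes A: "0 < coord_sum x" and B: "0 < coord_sum y"
  defines "t \<equiv> coord_sum y / (coord_sum x + coord_sum y)"
    and "p \<equiv> (1 / coord_sum x) *\<^sub>R x" and "q \<equiv> (1 / coord_sum y) *\<^sub>R y"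
  shows "perspective \<psi> (x + y) = (coord_sum x + coord_sum y) * \<psi> ((1 - t) *\<^sub>R p + t *\<^sub>R q)"
    and "perspective \<psi> x + perspective \<psi> y = (coord_sum x + coord_sum y) * ((1 - t) * \<psi> p + t * \<psi> q)"
    and "0 < t" and "t < 1"
proof -
  have t: "1 - t = coord_sum x / (coord_sum x + coord_sum y)"
    using A B by (simp add: t_def field_simps)
  show "perspective \<psi> (x + y) = (coord_sum x + coord_sum y) * \<psi> ((1 - t) *\<^sub>R p + t *\<^sub>R q)"
    unfolding t using A B by (simp add: perspective_def t_def p_def q_def sum.distrib scaleR_right_distrib)
  show "perspective \<psi> x + perspective \<psi> y = (coord_sum x + coord_sum y) * ((1 - t) * \<psi> p + t * \<psi> q)"
    unfolding t perspective_def p_def[symmetric] q_def[symmetric] using A B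
    by (simp add: t_def distrib_left)
  show "0 < t" "t < 1" using A B by (simp_all add: t_def)
qed

lemma perspective_add_le:
  assumes "convex_on Omega \<psi>" and x: "\<And>i. 0 \<le> x $ i" and y: "\<And>i. 0 \<le> y $ i"
  shows "perspective \<psi> (x + y) \<le> perspective \<psi> x + perspective \<psi> y"
proof (cases "x = 0 \<or> y = 0")
  case False
  then have A: "0 < coord_sum x" and B: "0 < coord_sum y"
    using x y nonneg_coord_sum_pos by blast+
  note eq = perspective_add_eq[OF A B]
  show ?thesis
    unfolding eq(1,2) using A B eq(3,4) scaled_in_Omega[OF x A] scaled_in_Omega[OF y B]
    by (intro mult_left_mono convex_onD[OF assms(1)]) (simp_all add: sum.distrib)
qed auto

lemma strictly_convex_onD:
  assumes "strictly_convex_on S f" and "x \<in> S" "y \<in> S" "x \<noteq> y" and "0 < u" "u < 1"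
  shows "f ((1 - u) *\<^sub>R x + u *\<^sub>R y) < (1 - u) * f x + u * f y"
  using assms unfolding strictly_convex_on_def by blast

lemma perspective_add_less:
  assumes "strictly_convex_on Omega \<psi>" and x: "\<And>i. 0 \<le> x $ i" and y: "\<And>i. 0 \<le> y $ i"
    and A: "0 < coord_sum x" and B: "0 < coord_sum y"
    and "(1 / coord_sum x) *\<^sub>R x \<noteq> (1 / coord_sum y) *\<^sub>R y"
  shows "perspective \<psi> (x + y) < perspective \<psi> x + perspective \<psi> y"
proof -
  note eq = perspective_add_eq[OF A B]
  show ?thesis
    unfolding eq(1,2) using assms eq(3,4) scaled_in_Omega[OF x A] scaled_in_Omega[OF y B]
    by (intro mult_strict_left_mono strictly_convex_onD[OF assms(1)]) simp_all
qed

lemma perspective_drop_coordinate_le: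
  fixes y :: "real ^ 'n::finite" and i :: 'n
  defines "z \<equiv> \<chi> j. if j = i then 0 else y $ j"
  assumes "\<psi> \<in> Psi" and y: "\<And>j. 0 \<le> y $ j" and yi: "0 < y $ i" and z: "0 < coord_sum z"
  shows "perspective \<psi> z \<le> perspective \<psi> y"
proof -
  define S where "S = coord_sum y"
  define t where "t = (1 / S) *\<^sub>R y"
  have S: "S = coord_sum z + y $ i"
    unfolding S_def z_def by (rule coord_sum_drop_coordinate)
  have zj: "z $ j = (if j = i then 0 else y $ j)" for j
    by (simp add: z_def)
  have "y $ j < S" for j
  proof (cases "j = i")
    case False
    then have "y $ j = z $ j" by (simp add: zj)
    also have "\<dots> \<le> coord_sum z" by (rule member_le_sum) (auto simp: zj y)
    finally show ?thesis using S yi by simp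
  qed (use S z in simp)
  then have "t \<in> Omega_circ"
    using scaled_in_Omega[OF y] z yi by (simp add: Omega_circ_def t_def S_def[symmetric] S)
  then have "(1 - t $ i) * \<psi> (\<chi> j. if j = i then 0 else t $ j / (1 - t $ i)) \<le> \<psi> t"
    using assms(2) by (simp add: Psi_def)
  moreover have ti: "1 - t $ i = coord_sum z / S"
    using S z yi by (simp add: t_def field_simps)
  moreover have "(\<chi> j. if j = i then 0 else t $ j / (1 - t $ i)) = (1 / coord_sum z) *\<^sub>R z"
    unfolding ti using S z yi by (simp add: vec_eq_iff t_def zj)
  ultimately have "coord_sum z / S * \<psi> ((1 / coord_sum z) *\<^sub>R z) \<le> \<psi> t" by simp
  then show ?thesis
    using S z yi by (simp add: perspective_def t_def S_def[symmetric] field_simps)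
qed

lemma coordinate_segment:
  fixes x y :: "real ^ 'n::finite"
  assumes "\<And>j. j \<noteq> i \<Longrightarrow> y $ j = x $ j" and "y $ i \<noteq> 0"
  shows "x = (1 - x $ i / y $ i) *\<^sub>R (\<chi> j. if j = i then 0 else y $ j) + (x $ i / y $ i) *\<^sub>R y"
  using assms by (auto simp: vec_eq_iff algebra_simps)

lemma perspective_mono_coordinate:
  fixes x y :: "real ^ 'n::finite"
  assumes \<psi>: "\<psi> \<in> Psi" and n: "CARD('n) \<ge> 2" and x: "\<And>j. 0 < x $ j"
    and same: "\<And>j. j \<noteq> i \<Longrightarrow> y $ j = x $ j" and xy: "x $ i \<le> y $ i"
  shows "perspective \<psi> x \<le> perspective \<psi> y"
proof -
  define z where "z = (\<chi> j. if j = i then 0 else y $ j)"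
  define l where "l = x $ i / y $ i"
  have y: "0 < y $ j" for j using x same xy by (metis order_less_le_trans)
  have l: "0 < l" "l \<le> 1" using x y xy by (simp_all add: l_def)
  have z: "\<And>j. 0 \<le> z $ j" "0 < coord_sum z"
    using coord_sum_drop_coordinate_pos[OF n y] y by (simp_all add: z_def less_imp_le)
  have zy: "perspective \<psi> z \<le> perspective \<psi> y"
    using \<psi> y z(2) unfolding z_def by (intro perspective_drop_coordinate_le) (simp_all add: less_imp_le)
  have "x = (1 - l) *\<^sub>R z + l *\<^sub>R y"
    unfolding z_def l_def using same y[of i] by (intro coordinate_segment) auto
  then have "perspective \<psi> x = perspective \<psi> ((1 - l) *\<^sub>R z + l *\<^sub>R y)"
    by (rule arg_cong)
  also have "\<dots> \<le> perspective \<psi> ((1 - l) *\<^sub>R z) + perspective \<psi> (l *\<^sub>R y)"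
    by (rule perspective_add_le) (use \<psi> z l y in \<open>simp_all add: Psi_def less_imp_le\<close>)
  also have "\<dots> = (1 - l) * perspective \<psi> z + l * perspective \<psi> y"
    using l by (simp add: perspective_scaleR)
  also have "\<dots> \<le> (1 - l) * perspective \<psi> y + l * perspective \<psi> y"
    using zy l by (intro add_right_mono mult_left_mono) simp_all
  finally show ?thesis by (simp add: algebra_simps)
qed

lemma perspective_strict_mono_coordinate:
  fixes x y :: "real ^ 'n::finite"
  assumes \<psi>: "\<psi> \<in> Psi_sc" and n: "CARD('n) \<ge> 2" and x: "\<And>j. 0 < x $ j"
    and same: "\<And>j. j \<noteq> i \<Longrightarrow> y $ j = x $ j" and xy: "x $ i < y $ i"
  shows "perspective \<psi> x < perspective \<psi> y"
proof -
  define z where "z = (\<chi> j. if j = i then 0 else y $ j)"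
  define l where "l = x $ i / y $ i"
  have y: "0 < y $ j" for j using x same xy by (metis order.strict_trans)
  have l: "0 < l" "l < 1" using x y xy by (simp_all add: l_def)
  have z: "\<And>j. 0 \<le> z $ j" "0 < coord_sum z"
    using coord_sum_drop_coordinate_pos[OF n y] y by (simp_all add: z_def less_imp_le)
  have zy: "perspective \<psi> z \<le> perspective \<psi> y"
    using \<psi> y z(2) unfolding z_def Psi_sc_def
    by (intro perspective_drop_coordinate_le) (simp_all add: less_imp_le)
  have "x = (1 - l) *\<^sub>R z + l *\<^sub>R y"
    unfolding z_def l_def using same y[of i] by (intro coordinate_segment) auto
  then have "perspective \<psi> x = perspective \<psi> ((1 - l) *\<^sub>R z + l *\<^sub>R y)"
    by (rule arg_cong)
  also have "\<dots> < perspective \<psi> ((1 - l) *\<^sub>R z) + perspective \<psi> (l *\<^sub>R y)"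
  proof (rule perspective_add_less)
    show "strictly_convex_on Omega \<psi>" using \<psi> by (simp add: Psi_sc_def)
    show "0 < coord_sum ((1 - l) *\<^sub>R z)" "0 < coord_sum (l *\<^sub>R y)"
      using z y l by (simp_all add: sum_distrib_left[symmetric] sum_pos)
    show "(1 / coord_sum ((1 - l) *\<^sub>R z)) *\<^sub>R ((1 - l) *\<^sub>R z) \<noteq> (1 / coord_sum (l *\<^sub>R y)) *\<^sub>R (l *\<^sub>R y)"
      using y[of i] \<open>0 < coord_sum (l *\<^sub>R y)\<close> by (auto simp: vec_eq_iff z_def)
  qed (use z l y in \<open>simp_all add: less_imp_le\<close>)
  also have "\<dots> = (1 - l) * perspective \<psi> z + l * perspective \<psi> y"
    using l by (simp add: perspective_scaleR)
  also have "\<dots> \<le> (1 - l) * perspective \<psi> y + l * perspective \<psi> y"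
    using zy l by (intro add_right_mono mult_left_mono) simp_all
  finally show ?thesis by (simp add: algebra_simps)
qed

lemma perspective_mono:
  fixes a b :: "real ^ 'n::finite"
  assumes \<psi>: "\<psi> \<in> Psi" and n: "CARD('n) \<ge> 2"
    and a: "\<And>i. 0 < a $ i" and ab: "\<And>i. a $ i \<le> b $ i"
  shows "perspective \<psi> a \<le> perspective \<psi> b"
proof -
  have "perspective \<psi> a \<le> perspective \<psi> (\<chi> j. if j \<in> F then b $ j else a $ j)" for F
    using finite[of F]
  proof (induction F rule: finite_induct)
    case (insert i F)
    have "perspective \<psi> (\<chi> j. if j \<in> F then b $ j else a $ j)
        \<le> perspective \<psi> (\<chi> j. if j \<in> insert i F then b $ j else a $ j)"
      by (rule perspective_mono_coordinate[OF \<psi> n])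
        (use a ab insert.hyps in \<open>auto intro: order.strict_trans2\<close>)
    with insert.IH show ?case by linarith
  qed simp
  from this[of UNIV] show ?thesis by simp
qed

lemma perspective_strict_mono:
  fixes a b :: "real ^ 'n::finite"
  assumes \<psi>: "\<psi> \<in> Psi_sc" and n: "CARD('n) \<ge> 2"
    and a: "\<And>i. 0 < a $ i" and ab: "\<And>i. a $ i \<le> b $ i" and i: "a $ i < b $ i"
  shows "perspective \<psi> a < perspective \<psi> b"
proof -
  define x where "x = (\<chi> j. if j = i then a $ i else b $ j)"
  have "perspective \<psi> a \<le> perspective \<psi> x"
    using \<psi> by (intro perspective_mono[OF _ n a]) (simp_all add: Psi_sc_def x_def ab)
  also have "\<dots> < perspective \<psi> b"
    by (rule perspective_strict_mono_coordinate[OF \<psi> n, of x i])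
      (use a ab i in \<open>auto simp: x_def intro: order.strict_trans2\<close>)
  finally show ?thesis .
qed

theorem lemma2p8:
  fixes a b :: "real ^ 'n::finite"
  assumes n2: "CARD('n) \<ge> 2"
    and pos: "\<And>i. 0 < a $ i" and le: "\<And>i. a $ i \<le> b $ i"
  shows "(\<forall>\<psi>\<in>Psi.
           (\<Sum>i\<in>UNIV. a $ i) * \<psi> ((1 / (\<Sum>i\<in>UNIV. a $ i)) *\<^sub>R a)
             \<le> (\<Sum>i\<in>UNIV. b $ i) * \<psi> ((1 / (\<Sum>i\<in>UNIV. b $ i)) *\<^sub>R b)) \<and>
         (\<forall>\<psi>\<in>Psi_sc. (\<exists>i. a $ i < b $ i) \<longrightarrow>
           (\<Sum>i\<in>UNIV. a $ i) * \<psi> ((1 / (\<Sum>i\<in>UNIV. a $ i)) *\<^sub>R a)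
             < (\<Sum>i\<in>UNIV. b $ i) * \<psi> ((1 / (\<Sum>i\<in>UNIV. b $ i)) *\<^sub>R b))"
  using perspective_mono[OF _ n2 pos le] perspective_strict_mono[OF _ n2 pos le]
  unfolding perspective_def by blast

end
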